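(* Let $1\le k\le n-1$ and let $T$ be a tableau of shape $k\times(n-k)$. Then there is a unique multiset $\varphi_{NN}(T)$ of pairwise nonnesting vectors in $V^*_{k,n}$ whose summing tableau is $T$, and there is a unique multiset $\varphi_{NC}(T)$ of pairwise noncrossing vectors in $V^*_{k,n}$ whose summing tableau is $T$. (Equal vectors are considered both nonnesting and noncrossing with each other.)
   Context: $V_{k,n}$ denotes the set of integer vectors $I=(i_1,\dots,i_k)$ with $1\le i_1<\dots<i_k\le n$, and $V^*_{k,n}=V_{k,n}\setminus\{(n-k+1,\dots,n)\}$. Two arcs $(p<p')$, $(q<q')$ cross if $p<q<p'<q'$ or $q<p<q'<p'$; they nest if $p<q<q'<p'$ or $q<p<p'<q'$. $I,J\in V_{k,n}$ are noncrossing if for all $1\le a<b\le k$ with $i_\ell=j_\ell$ for all $a<\ell<b$, the arcs $(i_a<i_b)$ and $(j_a<j_b)$ do not cross; they are nonnesting if for all $1\le a<b\le k$ these arcs do not nest (equivalently $I\le J$ or $J\le I$ componentwise). A tableau of shape $k\times(n-k)$ is an array $T=(t_{a,b})_{a\in[k],b\in[n-k]}$ of nonnegative integers with $t_{a,b}\le t_{a,b+1}$ and $t_{a+1,b}\le t_{a,b}$ (rows indexed from top to bottom). The summing tableau of a finite multiset $L$ of vectors in $V_{k,n}$ is $t_{a,b}=\#\{I\in L : i_a\le a+b-1\}$ (counted with multiplicity); equivalently it is $\sum_{I\in L}\chi_I$ where $(\chi_I)_{a,b}=1$ if $i_a\le a+b-1$ and $0$ otherwise. *)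

theory Defs
  imports Main "HOL-Library.Multiset"
begin

text \<open>A vector I = (i_1,...,i_k) is represented as a list of naturals of length k;
  the 1-indexed entry i_a is ent I a = I ! (a - 1).\<close>

definition ent :: "nat list \<Rightarrow> nat \<Rightarrow> nat" where
  "ent I a = I ! (a - 1)"

definition Vkn :: "nat \<Rightarrow> nat \<Rightarrow> nat list set" where
  "Vkn k n = {I. length I = k \<and> sorted_wrt (<) I \<and> set I \<subseteq> {1..n}}"

definition Vstar :: "nat \<Rightarrow> nat \<Rightarrow> nat list set" where
  "Vstar k n = Vkn k n - {[n - k + 1 ..< n + 1]}"

definition arcs_cross :: "nat \<Rightarrow> nat \<Rightarrow> nat \<Rightarrow> nat \<Rightarrow> bool" where
  "arcs_cross p p' q q' \<longleftrightarrow> (p < q \<and> q < p' \<and> p' < q') \<or> (q < p \<and> p < q' \<and> q' < p')"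

definition arcs_nest :: "nat \<Rightarrow> nat \<Rightarrow> nat \<Rightarrow> nat \<Rightarrow> bool" where
  "arcs_nest p p' q q' \<longleftrightarrow> (p < q \<and> q < q' \<and> q' < p') \<or> (q < p \<and> p < p' \<and> p' < q')"

definition noncrossing :: "nat \<Rightarrow> nat list \<Rightarrow> nat list \<Rightarrow> bool" where
  "noncrossing k I J \<longleftrightarrow>
     (\<forall>a b. 1 \<le> a \<and> a < b \<and> b \<le> k \<and> (\<forall>l. a < l \<and> l < b \<longrightarrow> ent I l = ent J l)
        \<longrightarrow> \<not> arcs_cross (ent I a) (ent I b) (ent J a) (ent J b))"

definition nonnesting :: "nat \<Rightarrow> nat list \<Rightarrow> nat list \<Rightarrow> bool" where
  "nonnesting k I J \<longleftrightarrow>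
     (\<forall>a b. 1 \<le> a \<and> a < b \<and> b \<le> k
        \<longrightarrow> \<not> arcs_nest (ent I a) (ent I b) (ent J a) (ent J b))"

text \<open>Tableau of shape k x (n-k): entries t a b for a in [k], b in [n-k];
  values outside this range are irrelevant.\<close>

definition is_tableau :: "nat \<Rightarrow> nat \<Rightarrow> (nat \<Rightarrow> nat \<Rightarrow> nat) \<Rightarrow> bool" where
  "is_tableau k n T \<longleftrightarrow>
     (\<forall>a b. 1 \<le> a \<and> a \<le> k \<and> 1 \<le> b \<and> b < n - k \<longrightarrow> T a b \<le> T a (b + 1)) \<and>
     (\<forall>a b. 1 \<le> a \<and> a < k \<and> 1 \<le> b \<and> b \<le> n - k \<longrightarrow> T (a + 1) b \<le> T a b)"

definition summing_tableau :: "nat list multiset \<Rightarrow> nat \<Rightarrow> nat \<Rightarrow> nat" where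
  "summing_tableau L a b = size (filter_mset (\<lambda>I. ent I a \<le> a + b - 1) L)"

definition has_summing_tableau :: "nat \<Rightarrow> nat \<Rightarrow> nat list multiset \<Rightarrow> (nat \<Rightarrow> nat \<Rightarrow> nat) \<Rightarrow> bool" where
  "has_summing_tableau k n L T \<longleftrightarrow>
     (\<forall>a b. 1 \<le> a \<and> a \<le> k \<and> 1 \<le> b \<and> b \<le> n - k \<longrightarrow> summing_tableau L a b = T a b)"

end

theory Submission
  imports Defs
begin

(* Row a of a summing tableau lists the cumulative counts of the a-th entries of the vectors, so
   for multisets in V*_{k,n} the tableau and the "columns" (multisets of a-th entries) determine
   each other (summing_tableau_determines_columns, has_summing_tableau_same_columns).  The theorem
   therefore reduces to two statements about columns.
   - Nonnesting: pairwise nonnesting vectors form a chain for the entrywise order, and a chain is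
     determined by its columns (its top element consists of the column maxima).  The chain with
     summing tableau T is written down explicitly from T (locale tableau_data).
   - Noncrossing: by induction on k, truncating the vectors to their first k entries, a last column
     can be attached to a noncrossing multiset of truncations in exactly one noncrossing way
     (extension_unique, extension_exists): the colex-largest truncation takes the least available
     last entry above its own last entry.  Hence every multiset of increasing vectors has a unique
     noncrossing rearrangement with the same columns; applied to the chain solution it gives the
     noncrossing solution, which stays in V*_{k,n} because V*_{k,n} is described by the columns. *)

lemma filter_le_upt: "filter (\<lambda>m. m \<le> t) [1..<Suc N] = [1..<Suc (min t N)]"
  by (induction N) auto

lemma size_filter_mset_mono:
  assumes "\<And>x. x \<in># M \<Longrightarrow> P x \<Longrightarrow> Q x"
  shows "size (filter_mset P M) \<le> size (filter_mset Q M)"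
  using assms by (induction M) auto

lemma size_filter_mset_all:
  assumes "\<And>x. x \<in># M \<Longrightarrow> P x"
  shows "size (filter_mset P M) = size M"
  using assms by (induction M) auto

lemma nat_mset_eqI_cumulative:
  fixes M M' :: "nat multiset"
  assumes "\<And>t. size (filter_mset (\<lambda>x. x \<le> t) M) = size (filter_mset (\<lambda>x. x \<le> t) M')"
  shows "M = M'"
proof -
  have count_le: "size (filter_mset (\<lambda>x. x \<le> v) N) = size (filter_mset (\<lambda>x. x < v) N) + count N v"
    for N :: "nat multiset" and v
  proof -
    have "filter_mset (\<lambda>x. x \<le> v) N = filter_mset (\<lambda>x. x < v) N + filter_mset (\<lambda>x. x = v) N"
      by (induction N) auto
    then show ?thesis by (simp add: filter_eq_replicate_mset)
  qed
  have less: "size (filter_mset (\<lambda>x. x < v) M) = size (filter_mset (\<lambda>x. x < v) M')" for v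
  proof (cases v)
    case (Suc u)
    then have "\<And>N. filter_mset (\<lambda>x. x < v) N = filter_mset (\<lambda>x. x \<le> u) N" by (auto intro: filter_mset_cong)
    then show ?thesis using assms by simp
  qed simp
  have "count M v = count M' v" for v
    using count_le[of v M] count_le[of v M'] assms[of v] less[of v] by simp
  then show ?thesis by (simp add: multiset_eq_iff)
qed

subsection \<open>Increasing vectors and the sets V and V*\<close>

lemma sorted_nth_gap:
  assumes "sorted_wrt (<) (xs :: nat list)" "i \<le> j" "j < length xs"
  shows "xs ! i + (j - i) \<le> xs ! j"
  using assms(2,3)
proof (induction j rule: dec_induct)
  case (step m)
  have "xs ! m < xs ! Suc m" using assms(1) step by (simp add: sorted_wrt_iff_nth_less)
  with step show ?case by simp
qed simp

lemma ent_strict_mono: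
  assumes "sorted_wrt (<) I" "length I = k" "1 \<le> a" "a < b" "b \<le> k"
  shows "ent I a < ent I b"
  using assms unfolding ent_def sorted_wrt_iff_nth_less by auto

lemma Vkn_ent_bounds:
  assumes "I \<in> Vkn k n" "1 \<le> a" "a \<le> k"
  shows "a \<le> ent I a" "ent I a \<le> n - k + a" "k \<le> n"
proof -
  have l: "length I = k" and s: "sorted_wrt (<) I" and r: "set I \<subseteq> {1..n}"
    using assms(1) by (auto simp: Vkn_def)
  have "I ! 0 \<in> set I" "I ! (k - 1) \<in> set I" using l assms(2,3) by auto
  then have first: "1 \<le> I ! 0" and last: "I ! (k - 1) \<le> n" using r by auto
  have "I ! 0 + (a - 1) \<le> I ! (a - 1)" using sorted_nth_gap[OF s, of 0 "a - 1"] l assms by simp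
  moreover have "I ! (a - 1) + (k - a) \<le> I ! (k - 1)"
    using sorted_nth_gap[OF s, of "a - 1" "k - 1"] l assms by simp
  ultimately show "a \<le> ent I a" "ent I a \<le> n - k + a" "k \<le> n"
    using first last assms(2,3) by (auto simp: ent_def)
qed

(* Excluding the last vector (n-k+1,...,n) means exactly that the first entry is at most n - k. *)
lemma Vstar_ent_1:
  assumes "I \<in> Vstar k n" "1 \<le> k"
  shows "ent I 1 \<le> n - k"
proof (rule ccontr)
  assume big: "\<not> ent I 1 \<le> n - k"
  have V: "I \<in> Vkn k n" and ne: "I \<noteq> [n - k + 1 ..< n + 1]" using assms by (auto simp: Vstar_def)
  have l: "length I = k" and s: "sorted_wrt (<) I" using V by (auto simp: Vkn_def)
  have kn: "k \<le> n" and e1: "ent I 1 = n - k + 1" using Vkn_ent_bounds[OF V, of 1] assms big by auto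
  have "I ! i = n - k + 1 + i" if "i < k" for i
  proof -
    have "I ! 0 + i \<le> I ! i" using sorted_nth_gap[OF s, of 0 i] l that by simp
    moreover have "ent I (Suc i) \<le> n - k + Suc i" using Vkn_ent_bounds[OF V, of "Suc i"] that by simp
    ultimately show ?thesis using e1 by (simp add: ent_def)
  qed
  then have "I = [n - k + 1 ..< n + 1]" using l kn by (intro nth_equalityI) (auto simp del: upt_Suc)
  with ne show False ..
qed

definition increasing_vectors :: "nat \<Rightarrow> nat list multiset \<Rightarrow> bool" where
  "increasing_vectors k L \<longleftrightarrow> (\<forall>I\<in>#L. length I = k \<and> sorted_wrt (<) I)"

lemma Vstar_increasing: "set_mset L \<subseteq> Vstar k n \<Longrightarrow> increasing_vectors k L"
  unfolding increasing_vectors_def Vstar_def Vkn_def by auto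

subsection \<open>Columns\<close>

definition column :: "nat \<Rightarrow> nat list multiset \<Rightarrow> nat multiset" where
  "column a L = image_mset (\<lambda>I. ent I a) L"

(* Two multisets with the same columns; the size is recorded separately so that k = 0 is covered. *)
definition same_columns :: "nat \<Rightarrow> nat list multiset \<Rightarrow> nat list multiset \<Rightarrow> bool" where
  "same_columns k L L' \<longleftrightarrow> size L = size L' \<and> (\<forall>a. 1 \<le> a \<and> a \<le> k \<longrightarrow> column a L = column a L')"

(* Every vector of L' is assembled from entries that occur in the columns of L, so the
   bounds defining V*_{k,n} carry over from L to L'. *)
lemma Vstar_same_columns:
  assumes k: "1 \<le> k" and L: "set_mset L \<subseteq> Vstar k n"
    and incr: "increasing_vectors k L'" and same: "same_columns k L' L"
  shows "set_mset L' \<subseteq> Vstar k n"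
proof
  fix I assume I: "I \<in># L'"
  have lI: "length I = k" "sorted_wrt (<) I" using incr I by (auto simp: increasing_vectors_def)
  have witness: "\<exists>J\<in>#L. J \<in> Vstar k n \<and> ent J a = ent I a" if "1 \<le> a" "a \<le> k" for a
  proof -
    have "ent I a \<in># column a L'" using I by (simp add: column_def)
    then have "ent I a \<in># column a L" using same that by (simp add: same_columns_def)
    then show ?thesis using L by (auto simp: column_def)
  qed
  have "set I \<subseteq> {1..n}"
  proof
    fix x assume "x \<in> set I"
    then obtain i where i: "i < k" "x = ent I (Suc i)" using lI by (auto simp: in_set_conv_nth ent_def)
    then obtain J where "J \<in> Vkn k n" "ent J (Suc i) = x" using witness[of "Suc i"] by (auto simp: Vstar_def)
    then show "x \<in> {1..n}" using Vkn_ent_bounds[of J k n "Suc i"] i by auto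
  qed
  then have "I \<in> Vkn k n" using lI by (simp add: Vkn_def)
  moreover obtain J where "J \<in> Vstar k n" "ent J 1 = ent I 1" using witness[of 1] k by auto
  then have "ent I 1 \<noteq> ent [n - k + 1 ..< n + 1] 1"
    using Vstar_ent_1[of J k n] k Vkn_ent_bounds(3)[OF \<open>I \<in> Vkn k n\<close> k order_refl]
    by (simp add: ent_def del: upt_Suc)
  ultimately show "I \<in> Vstar k n" by (auto simp: Vstar_def)
qed

subsection \<open>The summing tableau determines the columns\<close>

lemma summing_tableau_column:
  "summing_tableau L a b = size (filter_mset (\<lambda>x. x \<le> a + b - 1) (column a L))"
  by (simp add: summing_tableau_def column_def filter_mset_image_mset)

lemma has_summing_tableau_same_columns:
  "same_columns k L L' \<Longrightarrow> has_summing_tableau k n L T = has_summing_tableau k n L' T"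
  unfolding has_summing_tableau_def summing_tableau_column same_columns_def by auto

lemma Vstar_column_bounds:
  assumes "set_mset L \<subseteq> Vstar k n" "x \<in># column a L" "1 \<le> a" "a \<le> k"
  shows "a \<le> x" "x \<le> n - k + a"
  using assms Vkn_ent_bounds[of _ k n a] by (auto simp: column_def Vstar_def)

(* The top-right entry T 1 (n-k) counts all vectors, since every first entry is at most n - k. *)
lemma size_from_tableau:
  assumes "set_mset L \<subseteq> Vstar k n" "1 \<le> k" "k \<le> n - 1" "has_summing_tableau k n L T"
  shows "size L = T 1 (n - k)"
proof -
  have "summing_tableau L 1 (n - k) = size L"
    unfolding summing_tableau_def using assms(1,2) Vstar_ent_1[of _ k n]
    by (intro size_filter_mset_all) auto
  then show ?thesis using assms by (auto simp: has_summing_tableau_def)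
qed

(* Row a of the tableau records the cumulative counts of column a inside its possible range
   [a, n-k+a]; outside that range the counts are 0 or everything. *)
lemma summing_tableau_determines_columns:
  assumes L: "set_mset L \<subseteq> Vstar k n" and L': "set_mset L' \<subseteq> Vstar k n"
    and k: "1 \<le> k" "k \<le> n - 1"
    and T: "has_summing_tableau k n L T" "has_summing_tableau k n L' T"
  shows "same_columns k L L'"
  unfolding same_columns_def
proof (intro conjI allI impI)
  show size: "size L = size L'" using size_from_tableau[OF L k T(1)] size_from_tableau[OF L' k T(2)] by simp
  fix a assume a: "1 \<le> a \<and> a \<le> k"
  show "column a L = column a L'"
  proof (rule nat_mset_eqI_cumulative)
    fix t
    have below: "filter_mset (\<lambda>x. x \<le> t) (column a M) = {#}"
      if "t < a" "set_mset M \<subseteq> Vstar k n" for M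
      using Vstar_column_bounds[OF that(2)] a that(1) by fastforce
    have above: "size (filter_mset (\<lambda>x. x \<le> t) (column a M)) = size M"
      if "n - k + a \<le> t" "set_mset M \<subseteq> Vstar k n" for M
      using Vstar_column_bounds[OF that(2)] a that(1)
      by (subst size_filter_mset_all) (force simp: column_def)+
    consider "t < a" | "a \<le> t" "t < n - k + a" | "n - k + a \<le> t" by linarith
    then show "size (filter_mset (\<lambda>x. x \<le> t) (column a L)) = size (filter_mset (\<lambda>x. x \<le> t) (column a L'))"
    proof cases
      case 1 then show ?thesis by (simp only: below[OF 1 L] below[OF 1 L'])
    next
      case 2
      then have "1 \<le> t - a + 1" "t - a + 1 \<le> n - k" "t = a + (t - a + 1) - 1" by auto
      then show ?thesis using T a unfolding has_summing_tableau_def summing_tableau_column by metis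
    next
      case 3 then show ?thesis using above L L' size by simp
    qed
  qed
qed

subsection \<open>Nonnesting multisets are chains for the entrywise order\<close>

definition entrywise_le :: "nat \<Rightarrow> nat list \<Rightarrow> nat list \<Rightarrow> bool" where
  "entrywise_le k I J \<longleftrightarrow> (\<forall>a. 1 \<le> a \<and> a \<le> k \<longrightarrow> ent I a \<le> ent J a)"

lemma comparable_nonnesting:
  assumes "entrywise_le k I J \<or> entrywise_le k J I"
  shows "nonnesting k I J"
  unfolding nonnesting_def
proof (intro allI impI)
  fix a b assume "1 \<le> a \<and> a < b \<and> b \<le> k"
  then have "ent I a \<le> ent J a \<and> ent I b \<le> ent J b \<or> ent J a \<le> ent I a \<and> ent J b \<le> ent I b"
    using assms unfolding entrywise_le_def by auto
  then show "\<not> arcs_nest (ent I a) (ent I b) (ent J a) (ent J b)" unfolding arcs_nest_def by auto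
qed

(* Conversely, if I and J are incomparable, an index where I is smaller and one where J is
   smaller give two nested arcs (the entries increase along each vector). *)
lemma nonnesting_comparable:
  assumes I: "sorted_wrt (<) I" "length I = k" and J: "sorted_wrt (<) J" "length J = k"
    and nn: "nonnesting k I J"
  shows "entrywise_le k I J \<or> entrywise_le k J I"
proof (rule ccontr)
  assume "\<not> ?thesis"
  then obtain a b where a: "1 \<le> a" "a \<le> k" "ent J a < ent I a"
    and b: "1 \<le> b" "b \<le> k" "ent I b < ent J b"
    unfolding entrywise_le_def by (meson not_le)
  have "a \<noteq> b" using a b by auto
  then have "a < b \<or> b < a" by linarith
  then show False
  proof
    assume ab: "a < b"
    then have "ent I a < ent I b" using ent_strict_mono[OF I] a b by auto
    then have "arcs_nest (ent I a) (ent I b) (ent J a) (ent J b)" using a b unfolding arcs_nest_def by auto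
    then show False using nn ab a b unfolding nonnesting_def by auto
  next
    assume ba: "b < a"
    then have "ent J b < ent J a" using ent_strict_mono[OF J] a b by auto
    then have "arcs_nest (ent I b) (ent I a) (ent J b) (ent J a)" using a b unfolding arcs_nest_def by auto
    then show False using nn ba a b unfolding nonnesting_def by auto
  qed
qed

(* The element of a chain with largest entry sum is its entrywise maximum, so its entries are
   the column maxima. *)
lemma chain_top_element:
  assumes ne: "M \<noteq> {#}" and chain: "\<forall>I\<in>#M. \<forall>J\<in>#M. entrywise_le k I J \<or> entrywise_le k J I"
  obtains m where "m \<in># M" "\<And>a. 1 \<le> a \<Longrightarrow> a \<le> k \<Longrightarrow> ent m a = Max_mset (column a M)"
proof -
  define weight where "weight I = (\<Sum>a\<in>{1..k}. ent I a)" for I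
  have "Max (weight ` set_mset M) \<in> weight ` set_mset M" using ne by (intro Max_in) auto
  then obtain m where m: "m \<in># M" "weight m = Max (weight ` set_mset M)" by auto
  have heaviest: "weight I \<le> weight m" if "I \<in># M" for I
    unfolding m(2) using that by (intro Max_ge) auto
  have top: "entrywise_le k I m" if I: "I \<in># M" for I
  proof (rule ccontr)
    assume not_le: "\<not> entrywise_le k I m"
    then have "entrywise_le k m I" using chain m(1) I by blast
    moreover obtain a where "1 \<le> a" "a \<le> k" "ent m a < ent I a"
      using not_le unfolding entrywise_le_def by auto
    ultimately have "weight m < weight I"
      unfolding weight_def entrywise_le_def by (intro sum_strict_mono_ex1) auto
    with heaviest[OF I] show False by simp
  qed
  show ?thesis
  proof (rule that[OF m(1)])
    fix a assume "1 \<le> a" "a \<le> k"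
    then show "ent m a = Max_mset (column a M)"
      using top m(1) unfolding column_def entrywise_le_def by (intro Max_eqI[symmetric]) auto
  qed
qed

(* Chains are determined by their columns: remove the common top element and induct. *)
lemma chain_determined_by_columns:
  assumes "\<forall>I\<in>#L. length I = k" "\<forall>I\<in>#L'. length I = k"
    "\<forall>I\<in>#L. \<forall>J\<in>#L. entrywise_le k I J \<or> entrywise_le k J I"
    "\<forall>I\<in>#L'. \<forall>J\<in>#L'. entrywise_le k I J \<or> entrywise_le k J I"
    "same_columns k L L'"
  shows "L = L'"
  using assms
proof (induction "size L" arbitrary: L L')
  case 0 then show ?case by (simp add: same_columns_def)
next
  case (Suc s)
  then have ne: "L \<noteq> {#}" "L' \<noteq> {#}" by (auto simp: same_columns_def)
  obtain m where m: "m \<in># L" "\<And>a. 1 \<le> a \<Longrightarrow> a \<le> k \<Longrightarrow> ent m a = Max_mset (column a L)"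
    using chain_top_element[OF ne(1) Suc.prems(3)] by blast
  obtain m' where m': "m' \<in># L'" "\<And>a. 1 \<le> a \<Longrightarrow> a \<le> k \<Longrightarrow> ent m' a = Max_mset (column a L')"
    using chain_top_element[OF ne(2) Suc.prems(4)] by blast
  have "m = m'"
  proof (rule nth_equalityI)
    show "length m = length m'" using m(1) m'(1) Suc.prems(1,2) by simp
    fix i assume "i < length m"
    then have "1 \<le> Suc i" "Suc i \<le> k" using m(1) Suc.prems(1) by auto
    then have "ent m (Suc i) = ent m' (Suc i)" using m(2) m'(2) Suc.prems(5) by (simp add: same_columns_def)
    then show "m ! i = m' ! i" by (simp add: ent_def)
  qed
  obtain R R' where R: "L = add_mset m R" "L' = add_mset m R'"
    using m(1) m'(1) \<open>m = m'\<close> by (metis multi_member_split)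
  have "R = R'"
  proof (rule Suc.hyps(1))
    show "s = size R" using Suc.hyps(2) R(1) by simp
    show "\<forall>I\<in>#R. length I = k" "\<forall>I\<in>#R'. length I = k"
      using Suc.prems(1,2) unfolding R by auto
    show "\<forall>I\<in>#R. \<forall>J\<in>#R. entrywise_le k I J \<or> entrywise_le k J I"
      "\<forall>I\<in>#R'. \<forall>J\<in>#R'. entrywise_le k I J \<or> entrywise_le k J I"
      using Suc.prems(3,4) unfolding R by auto
    show "same_columns k R R'" using Suc.prems(5) unfolding R by (simp add: same_columns_def column_def)
  qed
  then show ?case using R by simp
qed

lemma nonnesting_determined_by_columns:
  assumes "increasing_vectors k L" "increasing_vectors k L'"
    "\<forall>I\<in>#L. \<forall>J\<in>#L. nonnesting k I J" "\<forall>I\<in>#L'. \<forall>J\<in>#L'. nonnesting k I J"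
    "same_columns k L L'"
  shows "L = L'"
proof (rule chain_determined_by_columns)
  have chain: "\<forall>I\<in>#M. \<forall>J\<in>#M. entrywise_le k I J \<or> entrywise_le k J I"
    if incr: "increasing_vectors k M" and nn: "\<forall>I\<in>#M. \<forall>J\<in>#M. nonnesting k I J" for M
  proof (intro ballI)
    fix I J assume "I \<in># M" "J \<in># M"
    then show "entrywise_le k I J \<or> entrywise_le k J I"
      using incr nn nonnesting_comparable[of I k J] unfolding increasing_vectors_def by blast
  qed
  show "\<forall>I\<in>#L. \<forall>J\<in>#L. entrywise_le k I J \<or> entrywise_le k J I"
    "\<forall>I\<in>#L'. \<forall>J\<in>#L'. entrywise_le k I J \<or> entrywise_le k J I"
    using chain[OF assms(1,3)] chain[OF assms(2,4)] .
  show "\<forall>I\<in>#L. length I = k" "\<forall>I\<in>#L'. length I = k"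
    using assms(1,2) by (auto simp: increasing_vectors_def)
qed (fact assms(5))

subsection \<open>The nonnesting solution\<close>

(* For 1 \<le> m \<le> T 1 (n-k) let
   rank a m be the number of columns b with T a b < m; the m-th vector has entries a + rank a m.
   Its a-th entry is \<le> a + b - 1 iff m \<le> T a b, which makes T its summing tableau. *)

locale tableau_data =
  fixes k n :: nat and T :: "nat \<Rightarrow> nat \<Rightarrow> nat"
  assumes k_pos: "1 \<le> k" and k_le: "k \<le> n - 1" and tableau: "is_tableau k n T"
begin

lemma row_mono:
  assumes "1 \<le> a" "a \<le> k" "1 \<le> b" "b \<le> b'" "b' \<le> n - k"
  shows "T a b \<le> T a b'"
  using assms(4,5)
proof (induction b' rule: dec_induct)
  case (step m)
  then have "T a m \<le> T a (m + 1)" using tableau assms(1-3) unfolding is_tableau_def by auto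
  with step show ?case by simp
qed simp

lemma column_antimono:
  assumes "1 \<le> a" "a \<le> a'" "a' \<le> k" "1 \<le> b" "b \<le> n - k"
  shows "T a' b \<le> T a b"
  using assms(2,3)
proof (induction a' rule: dec_induct)
  case (step m)
  then have "T (m + 1) b \<le> T m b" using tableau assms(1,4,5) unfolding is_tableau_def by auto
  with step show ?case by simp
qed simp

definition rank :: "nat \<Rightarrow> nat \<Rightarrow> nat" where
  "rank a m = card {b \<in> {1..n - k}. T a b < m}"

lemma rank_le: "rank a m \<le> n - k"
proof -
  have "rank a m \<le> card {1..n - k}" unfolding rank_def by (intro card_mono) auto
  then show ?thesis by simp
qed

(* Since row a is weakly increasing, the columns with T a b < m form an initial segment. *)
lemma rank_less_iff:
  assumes "1 \<le> a" "a \<le> k" "1 \<le> b" "b \<le> n - k"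
  shows "rank a m < b \<longleftrightarrow> m \<le> T a b"
proof
  assume le: "m \<le> T a b"
  have "{b' \<in> {1..n - k}. T a b' < m} \<subseteq> {1..b - 1}"
  proof
    fix b' assume b': "b' \<in> {b' \<in> {1..n - k}. T a b' < m}"
    then have "\<not> b \<le> b'" using row_mono[OF assms(1-3), of b'] le by auto
    then show "b' \<in> {1..b - 1}" using b' by auto
  qed
  then have "rank a m \<le> card {1..b - 1}" unfolding rank_def by (intro card_mono) auto
  then show "rank a m < b" using assms by simp
next
  assume less: "rank a m < b"
  show "m \<le> T a b"
  proof (rule ccontr)
    assume "\<not> m \<le> T a b"
    then have "{1..b} \<subseteq> {b' \<in> {1..n - k}. T a b' < m}"
      using row_mono[OF assms(1,2)] assms by force
    then have "card {1..b} \<le> rank a m" unfolding rank_def by (intro card_mono) auto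
    then show False using less by simp
  qed
qed

lemma rank_mono: "m \<le> m' \<Longrightarrow> rank a m \<le> rank a m'"
  unfolding rank_def by (intro card_mono) auto

lemma rank_mono_row: "1 \<le> a \<Longrightarrow> a \<le> a' \<Longrightarrow> a' \<le> k \<Longrightarrow> rank a m \<le> rank a' m"
  unfolding rank_def using column_antimono by (intro card_mono) (auto intro: le_less_trans)

definition vec :: "nat \<Rightarrow> nat list" where
  "vec m = map (\<lambda>a. a + rank a m) [1..<Suc k]"

lemma length_vec: "length (vec m) = k"
  by (simp add: vec_def)

lemma ent_vec:
  assumes "1 \<le> a" "a \<le> k"
  shows "ent (vec m) a = a + rank a m"
proof -
  have "[1..<Suc k] ! (a - 1) = a" using nth_upt[of 1 "a - 1" "Suc k"] assms by (simp del: upt_Suc)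
  then show ?thesis using assms by (simp add: vec_def ent_def del: upt_Suc)
qed

lemma vec_increasing: "sorted_wrt (<) (vec m)"
  unfolding sorted_wrt_iff_nth_less
proof (intro allI impI)
  fix i j assume ij: "i < j" "j < length (vec m)"
  then have "ent (vec m) (Suc i) < ent (vec m) (Suc j)"
    using rank_mono_row[of "Suc i" "Suc j" m] by (simp add: ent_vec length_vec)
  then show "vec m ! i < vec m ! j" by (simp add: ent_def)
qed

lemma vec_Vstar:
  assumes "1 \<le> m" "m \<le> T 1 (n - k)"
  shows "vec m \<in> Vstar k n"
proof -
  have "set (vec m) \<subseteq> {1..n}"
  proof
    fix x assume "x \<in> set (vec m)"
    then obtain a where "1 \<le> a" "a \<le> k" "x = a + rank a m" by (auto simp: vec_def simp del: upt_Suc)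
    then show "x \<in> {1..n}" using rank_le[of a m] k_le by auto
  qed
  then have V: "vec m \<in> Vkn k n" using vec_increasing by (simp add: Vkn_def length_vec)
  have "rank 1 m < n - k" using rank_less_iff[of 1 "n - k" m] k_pos k_le assms by simp
  then have "ent (vec m) 1 \<noteq> ent [n - k + 1 ..< n + 1] 1"
    using ent_vec[of 1 m] k_pos k_le by (simp add: ent_def del: upt_Suc)
  then show ?thesis using V by (auto simp: Vstar_def)
qed

definition chain_solution :: "nat list multiset" where
  "chain_solution = image_mset vec (mset [1..<Suc (T 1 (n - k))])"

lemma chain_solution_Vstar: "set_mset chain_solution \<subseteq> Vstar k n"
  unfolding chain_solution_def using vec_Vstar by auto

lemma chain_solution_nonnesting: "\<forall>I\<in>#chain_solution. \<forall>J\<in>#chain_solution. nonnesting k I J"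
proof (intro ballI)
  fix I J assume "I \<in># chain_solution" "J \<in># chain_solution"
  then obtain m m' where "I = vec m" "J = vec m'" unfolding chain_solution_def by auto
  moreover have "entrywise_le k (vec m) (vec m')" if "m \<le> m'" for m m'
    using that rank_mono unfolding entrywise_le_def by (auto simp: ent_vec)
  moreover have "m \<le> m' \<or> m' \<le> m" by linarith
  ultimately show "nonnesting k I J" using comparable_nonnesting by blast
qed

lemma chain_solution_summing: "has_summing_tableau k n chain_solution T"
  unfolding has_summing_tableau_def
proof (intro allI impI)
  fix a b assume ab: "1 \<le> a \<and> a \<le> k \<and> 1 \<le> b \<and> b \<le> n - k"
  have "T a b \<le> T 1 b" using column_antimono[of 1 a b] ab by simp
  also have "T 1 b \<le> T 1 (n - k)" using row_mono[of 1 b "n - k"] ab k_pos by simp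
  finally have T_le: "T a b \<le> T 1 (n - k)" .
  have "summing_tableau chain_solution a b
      = length (filter (\<lambda>m. ent (vec m) a \<le> a + b - 1) [1..<Suc (T 1 (n - k))])"
    unfolding summing_tableau_def chain_solution_def filter_mset_image_mset size_image_mset
      mset_filter[symmetric] size_mset by (rule refl)
  also have "filter (\<lambda>m. ent (vec m) a \<le> a + b - 1) [1..<Suc (T 1 (n - k))]
      = filter (\<lambda>m. m \<le> T a b) [1..<Suc (T 1 (n - k))]"
  proof (rule filter_cong[OF refl])
    fix m
    have "ent (vec m) a \<le> a + b - 1 \<longleftrightarrow> rank a m < b" using ab ent_vec[of a m] by linarith
    then show "ent (vec m) a \<le> a + b - 1 \<longleftrightarrow> m \<le> T a b" using rank_less_iff[of a b m] ab by simp
  qed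
  also have "\<dots> = [1..<Suc (T a b)]"
    using T_le filter_le_upt[of "T a b" "T 1 (n - k)"] by (simp add: min_def del: upt_Suc)
  finally show "summing_tableau chain_solution a b = T a b" by simp
qed

end

subsection \<open>Noncrossing vectors: splitting off the last entry\<close>

definition pairwise_noncrossing :: "nat \<Rightarrow> nat list multiset \<Rightarrow> bool" where
  "pairwise_noncrossing k L \<longleftrightarrow> (\<forall>I\<in>#L. \<forall>J\<in>#L. noncrossing k I J)"

lemma noncrossing_sym: "noncrossing k I J \<Longrightarrow> noncrossing k J I"
  unfolding noncrossing_def arcs_cross_def by metis

lemma noncrossing_refl: "noncrossing k I I"
  unfolding noncrossing_def arcs_cross_def by auto

lemma pairwise_noncrossing_le_1: "k \<le> 1 \<Longrightarrow> pairwise_noncrossing k L"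
  unfolding pairwise_noncrossing_def noncrossing_def by auto

lemma ent_append: "1 \<le> l \<Longrightarrow> l \<le> length I \<Longrightarrow> ent (I @ [x]) l = ent I l"
  by (simp add: ent_def nth_append, linarith)

lemma ent_append_last: "length I = k \<Longrightarrow> ent (I @ [x]) (Suc k) = x"
  by (simp add: ent_def nth_append)

lemma ent_in_set: "1 \<le> a \<Longrightarrow> a \<le> length I \<Longrightarrow> ent I a \<in> set I"
  by (simp add: ent_def)

lemma increasing_snoc_split:
  assumes "length I = Suc k" "sorted_wrt (<) I"
  shows "I = butlast I @ [last I]" "length (butlast I) = k" "sorted_wrt (<) (butlast I)"
    "\<forall>y\<in>set (butlast I). y < last I"
proof -
  show split: "I = butlast I @ [last I]" using assms by (intro append_butlast_last_id[symmetric]) auto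
  show "length (butlast I) = k" using assms by simp
  have "sorted_wrt (<) (butlast I @ [last I])" using assms split by metis
  then show "sorted_wrt (<) (butlast I)" "\<forall>y\<in>set (butlast I). y < last I"
    by (auto simp: sorted_wrt_append)
qed

lemma le_ent_last:
  assumes "sorted_wrt (<) P" "length P = k" "y \<in> set P"
  shows "y \<le> ent P k"
proof -
  obtain i where i: "i < k" "y = ent P (Suc i)" using assms by (auto simp: in_set_conv_nth ent_def)
  then show ?thesis using ent_strict_mono[OF assms(1,2), of "Suc i" k] by (cases "Suc i = k") auto
qed

lemma noncrossing_snocD:
  assumes lengths: "length I = k" "length J = k" and nc: "noncrossing (Suc k) (I @ [x]) (J @ [y])"
  shows "noncrossing k I J"
    "\<And>a. 1 \<le> a \<Longrightarrow> a \<le> k \<Longrightarrow> (\<forall>l. a < l \<and> l \<le> k \<longrightarrow> ent I l = ent J l) \<Longrightarrow>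
       \<not> arcs_cross (ent I a) x (ent J a) y"
proof -
  show "noncrossing k I J" unfolding noncrossing_def
  proof (intro allI impI)
    fix a b assume ab: "1 \<le> a \<and> a < b \<and> b \<le> k \<and> (\<forall>l. a < l \<and> l < b \<longrightarrow> ent I l = ent J l)"
    then have "\<forall>l. a < l \<and> l < b \<longrightarrow> ent (I @ [x]) l = ent (J @ [y]) l"
      using lengths by (auto simp: ent_append)
    then have "\<not> arcs_cross (ent (I @ [x]) a) (ent (I @ [x]) b) (ent (J @ [y]) a) (ent (J @ [y]) b)"
      using nc ab unfolding noncrossing_def by auto
    then show "\<not> arcs_cross (ent I a) (ent I b) (ent J a) (ent J b)" using ab lengths by (simp add: ent_append)
  qed
  fix a assume a: "1 \<le> a" "a \<le> k" "\<forall>l. a < l \<and> l \<le> k \<longrightarrow> ent I l = ent J l"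
  then have "\<not> arcs_cross (ent (I @ [x]) a) (ent (I @ [x]) (Suc k)) (ent (J @ [y]) a) (ent (J @ [y]) (Suc k))"
    using nc lengths unfolding noncrossing_def by (auto simp: ent_append)
  then show "\<not> arcs_cross (ent I a) x (ent J a) y" using a lengths by (simp add: ent_append ent_append_last)
qed

lemma noncrossing_snocI:
  assumes lengths: "length I = k" "length J = k" and nc: "noncrossing k I J"
    and last_arcs: "\<And>a. 1 \<le> a \<Longrightarrow> a \<le> k \<Longrightarrow> (\<forall>l. a < l \<and> l \<le> k \<longrightarrow> ent I l = ent J l) \<Longrightarrow>
       \<not> arcs_cross (ent I a) x (ent J a) y"
  shows "noncrossing (Suc k) (I @ [x]) (J @ [y])"
  unfolding noncrossing_def
proof (intro allI impI)
  fix a b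
  assume ab: "1 \<le> a \<and> a < b \<and> b \<le> Suc k \<and> (\<forall>l. a < l \<and> l < b \<longrightarrow> ent (I @ [x]) l = ent (J @ [y]) l)"
  show "\<not> arcs_cross (ent (I @ [x]) a) (ent (I @ [x]) b) (ent (J @ [y]) a) (ent (J @ [y]) b)"
  proof (cases "b = Suc k")
    case True
    then have "\<forall>l. a < l \<and> l \<le> k \<longrightarrow> ent I l = ent J l" using ab lengths by (auto simp: ent_append)
    then show ?thesis using last_arcs ab lengths True by (simp add: ent_append ent_append_last)
  next
    case False
    then have "\<forall>l. a < l \<and> l < b \<longrightarrow> ent I l = ent J l" using ab lengths by (auto simp: ent_append)
    then show ?thesis using nc ab lengths False unfolding noncrossing_def by (simp add: ent_append)
  qed
qed

subsection \<open>Colexicographic maxima\<close>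

definition colex_less :: "nat \<Rightarrow> nat list \<Rightarrow> nat list \<Rightarrow> bool" where
  "colex_less k Q P \<longleftrightarrow>
     (\<exists>d. 1 \<le> d \<and> d \<le> k \<and> ent Q d < ent P d \<and> (\<forall>l. d < l \<and> l \<le> k \<longrightarrow> ent Q l = ent P l))"

definition colex_max :: "nat \<Rightarrow> nat list \<Rightarrow> nat list set \<Rightarrow> bool" where
  "colex_max k P S \<longleftrightarrow> P \<in> S \<and> (\<forall>Q\<in>S. Q = P \<or> colex_less k Q P)"

lemma colex_less_snoc:
  assumes lengths: "length Q = k" "length P = k"
    and "y < c \<or> y = c \<and> colex_less k Q P"
  shows "colex_less (Suc k) (Q @ [y]) (P @ [c])"
  using assms(3)
proof
  assume "y < c"
  then show ?thesis unfolding colex_less_def using lengths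
    by (intro exI[of _ "Suc k"]) (simp add: ent_append_last)
next
  assume "y = c \<and> colex_less k Q P"
  then obtain d where d: "1 \<le> d" "d \<le> k" "ent Q d < ent P d" "\<forall>l. d < l \<and> l \<le> k \<longrightarrow> ent Q l = ent P l"
    and y: "y = c" unfolding colex_less_def by blast
  have "ent (Q @ [y]) l = ent (P @ [c]) l" if "d < l" "l \<le> Suc k" for l
    using d that lengths y by (cases "l = Suc k") (simp_all add: ent_append ent_append_last)
  then show ?thesis unfolding colex_less_def using d lengths
    by (intro exI[of _ d]) (simp add: ent_append)
qed

(* Maximise the last entry first, then recurse on the truncations of the vectors attaining it. *)
lemma colex_max_exists:
  assumes "finite S" "S \<noteq> {}" "\<forall>Q\<in>S. length Q = k"
  shows "\<exists>P. colex_max k P S"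
  using assms
proof (induction k arbitrary: S)
  case 0
  then have "S = {[]}" by auto
  then show ?case by (auto simp: colex_max_def)
next
  case (Suc k)
  define c where "c = Max (last ` S)"
  define S' where "S' = butlast ` {Q \<in> S. last Q = c}"
  have c_in: "c \<in> last ` S" unfolding c_def using Suc.prems by (intro Max_in) auto
  have c_ge: "last Q \<le> c" if "Q \<in> S" for Q unfolding c_def using Suc.prems that by (intro Max_ge) auto
  have split: "Q = butlast Q @ [last Q]" if "Q \<in> S" for Q
    using Suc.prems that by (intro append_butlast_last_id[symmetric]) auto
  have "finite S'" "S' \<noteq> {}" "\<forall>Q\<in>S'. length Q = k" using Suc.prems c_in by (auto simp: S'_def)
  then obtain P where P: "colex_max k P S'" using Suc.IH by blast
  then have P_in: "P @ [c] \<in> S" and lP: "length P = k"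
    using split \<open>\<forall>Q\<in>S'. length Q = k\<close> by (auto simp: colex_max_def S'_def)
  have "Q = P @ [c] \<or> colex_less (Suc k) Q (P @ [c])" if Q: "Q \<in> S" for Q
  proof -
    have lQ: "length (butlast Q) = k" using Suc.prems Q by auto
    have "last Q < c \<or> last Q = c \<and> (butlast Q = P \<or> colex_less k (butlast Q) P)"
      using c_ge[OF Q] P Q unfolding colex_max_def S'_def by force
    then show ?thesis using colex_less_snoc[OF lQ lP, of "last Q" c] split[OF Q] by auto
  qed
  then show ?case using P_in unfolding colex_max_def by blast
qed

lemma colex_max_last:
  assumes "colex_max k P S" "Q \<in> S" "1 \<le> k"
  shows "ent Q k \<le> ent P k"
proof -
  have "Q = P \<or> colex_less k Q P" using assms(1,2) by (simp add: colex_max_def)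
  then show ?thesis
  proof
    assume "colex_less k Q P"
    then obtain d where "d \<le> k" "ent Q d < ent P d" "\<forall>l. d < l \<and> l \<le> k \<longrightarrow> ent Q l = ent P l"
      unfolding colex_less_def by blast
    then show ?thesis by (cases "d = k") auto
  qed simp
qed

subsection \<open>Extending a noncrossing multiset by a last column\<close>

(* Given the truncations and the multiset of last
   entries, the colex-largest truncation P must be completed by the least last entry exceeding
   its own last entry; any other completion produces a crossing. *)
lemma colex_top_in_extension:
  assumes k: "1 \<le> k" and incr: "increasing_vectors (Suc k) L" and nc: "pairwise_noncrossing (Suc k) L"
    and top: "colex_max k P (set_mset (image_mset butlast L))"
    and x_def: "x = Min {y \<in> set_mset (image_mset last L). ent P k < y}"
  shows "P @ [x] \<in># L"
proof -
  define c where "c = ent P k"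
  obtain I0 where I0: "I0 \<in># L" "butlast I0 = P" using top unfolding colex_max_def by auto
  have lI0: "length I0 = Suc k" "sorted_wrt (<) I0" using incr I0(1) by (auto simp: increasing_vectors_def)
  define x0 where "x0 = last I0"
  have I0_eq: "I0 = P @ [x0]" and lP: "length P = k" and sP: "sorted_wrt (<) P"
    using increasing_snoc_split[OF lI0] I0(2) x0_def by auto
  have "c < x0" using increasing_snoc_split(4)[OF lI0] ent_in_set[of k P] I0(2) lP k x0_def c_def by auto
  define X where "X = {y \<in> set_mset (image_mset last L). c < y}"
  have X: "finite X" "x0 \<in> X" using I0(1) \<open>c < x0\<close> x0_def by (auto simp: X_def)
  have "x = Min X" unfolding x_def X_def c_def ..
  then have "x \<in> X" "x \<le> x0" using Min_in[OF X(1)] Min_le[OF X] X(2) by auto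
  then have x_in: "x \<in># image_mset last L" "c < x" and "x \<le> x0" by (auto simp: X_def)
  show ?thesis
  proof (cases "x = x0")
    case True then show ?thesis using I0 I0_eq by simp
  next
    case False
    with \<open>x \<le> x0\<close> have "x < x0" by simp
    obtain J where J: "J \<in># L" "last J = x" using x_in(1) by auto
    define Q where "Q = butlast J"
    have lJ: "length J = Suc k" "sorted_wrt (<) J" using incr J(1) by (auto simp: increasing_vectors_def)
    have J_eq: "J = Q @ [x]" and lQ: "length Q = k"
      using increasing_snoc_split[OF lJ] J(2) Q_def by auto
    have "Q = P \<or> colex_less k Q P" using top J(1) Q_def by (auto simp: colex_max_def)
    then show ?thesis
    proof
      assume "colex_less k Q P"
      then obtain d where d: "1 \<le> d" "d \<le> k" "ent Q d < ent P d"
        "\<forall>l. d < l \<and> l \<le> k \<longrightarrow> ent Q l = ent P l" unfolding colex_less_def by blast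
      have "noncrossing (Suc k) (Q @ [x]) (P @ [x0])"
        using nc J(1) I0(1) J_eq I0_eq unfolding pairwise_noncrossing_def by metis
      then have "\<not> arcs_cross (ent Q d) x (ent P d) x0" using noncrossing_snocD(2)[OF lQ lP] d by blast
      moreover have "ent P d \<le> c" using le_ent_last[OF sP lP ent_in_set] d lP c_def by simp
      ultimately show ?thesis using d(3) x_in(2) \<open>x < x0\<close> unfolding arcs_cross_def by auto
    qed (use J J_eq in simp)
  qed
qed

(* Both multisets contain the completed colex-largest truncation; remove it and induct. *)
lemma extension_unique:
  assumes "1 \<le> k" "increasing_vectors (Suc k) L" "increasing_vectors (Suc k) L'"
    "pairwise_noncrossing (Suc k) L" "pairwise_noncrossing (Suc k) L'"
    "image_mset butlast L = image_mset butlast L'" "image_mset last L = image_mset last L'"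
  shows "L = L'"
  using assms(2-)
proof (induction "size L" arbitrary: L L')
  case 0 then show ?case by (metis size_eq_0_iff_empty size_image_mset)
next
  case (Suc s)
  have "finite (set_mset (image_mset butlast L))" "set_mset (image_mset butlast L) \<noteq> {}"
    "\<forall>Q\<in>set_mset (image_mset butlast L). length Q = k"
    using Suc.hyps(2) Suc.prems(1) by (auto simp: increasing_vectors_def)
  then obtain P where top: "colex_max k P (set_mset (image_mset butlast L))"
    using colex_max_exists by blast
  define x where "x = Min {y \<in> set_mset (image_mset last L). ent P k < y}"
  have "P @ [x] \<in># L" using colex_top_in_extension[OF assms(1) Suc.prems(1,3) top x_def] .
  moreover have "P @ [x] \<in># L'"
    using colex_top_in_extension[OF assms(1) Suc.prems(2,4), of P x] top x_def Suc.prems(5,6) by simp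
  ultimately obtain R R' where R: "L = add_mset (P @ [x]) R" "L' = add_mset (P @ [x]) R'"
    by (metis multi_member_split)
  have "R = R'"
  proof (rule Suc.hyps(1))
    show "s = size R" using Suc.hyps(2) R by simp
    show "increasing_vectors (Suc k) R" "increasing_vectors (Suc k) R'"
      using Suc.prems(1,2) R by (auto simp: increasing_vectors_def)
    show "pairwise_noncrossing (Suc k) R" "pairwise_noncrossing (Suc k) R'"
      using Suc.prems(3,4) R by (auto simp: pairwise_noncrossing_def)
    show "image_mset butlast R = image_mset butlast R'" "image_mset last R = image_mset last R'"
      using Suc.prems(5,6) R by simp_all
  qed
  then show ?case using R by simp
qed

(* B can be attached as last entries to the vectors of P
   when it is "strictly above" their last column in Hall's sense: every initial segment
   {x \<le> t} of B is no larger than the part {x < t} of the column. *)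
definition strictly_above :: "nat multiset \<Rightarrow> nat multiset \<Rightarrow> bool" where
  "strictly_above B A \<longleftrightarrow> (\<forall>t. size (filter_mset (\<lambda>x. x \<le> t) B) \<le> size (filter_mset (\<lambda>x. x < t) A))"

lemma strictly_above_exceeds:
  assumes "strictly_above B (add_mset c A)" "size B = size (add_mset c A)"
  shows "\<exists>x\<in>#B. c < x"
proof (rule ccontr)
  assume "\<not> ?thesis"
  then have "size (filter_mset (\<lambda>x. x \<le> c) B) = size B" by (intro size_filter_mset_all) auto
  moreover have "size (filter_mset (\<lambda>x. x < c) (add_mset c A)) \<le> size A" by simp
  ultimately show False using assms unfolding strictly_above_def by (metis Suc_n_not_le_n le_trans size_add_mset)
qed

lemma strictly_above_remove:
  assumes above: "strictly_above (add_mset x B) (add_mset c A)"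
    and A_le: "\<forall>y\<in>#A. y \<le> c" and cx: "c < x" and gap: "\<forall>y\<in>#B. y \<le> c \<or> x \<le> y"
  shows "strictly_above B A"
  unfolding strictly_above_def
proof
  fix t
  have H: "size (filter_mset (\<lambda>y. y \<le> u) (add_mset x B)) \<le> size (filter_mset (\<lambda>y. y < u) (add_mset c A))" for u
    using above unfolding strictly_above_def by blast
  consider "t \<le> c" | "c < t" "t < x" | "x \<le> t" by linarith
  then show "size (filter_mset (\<lambda>y. y \<le> t) B) \<le> size (filter_mset (\<lambda>y. y < t) A)"
  proof cases
    case 1 then show ?thesis using H[of t] cx by simp
  next
    case 2
    have "filter_mset (\<lambda>y. y \<le> t) B = filter_mset (\<lambda>y. y \<le> c) B"
      using gap 2 by (intro filter_mset_cong) auto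
    moreover have "size (filter_mset (\<lambda>y. y \<le> c) B) \<le> size A"
      using H[of c] cx by (simp add: le_trans[OF _ size_filter_mset_lesseq])
    moreover have "size (filter_mset (\<lambda>y. y < t) A) = size A"
      using A_le 2 by (intro size_filter_mset_all) force
    ultimately show ?thesis by simp
  next
    case 3 then show ?thesis using H[of t] cx by simp
  qed
qed

lemma strictly_above_split:
  assumes above: "strictly_above B (add_mset c A)" and size: "size B = size (add_mset c A)"
    and A_le: "\<forall>y\<in>#A. y \<le> c"
  obtains x B1 where "B = add_mset x B1" "c < x" "\<forall>y\<in>#B1. y \<le> c \<or> x \<le> y" "strictly_above B1 A"
proof -
  define X where "X = {y \<in> set_mset B. c < y}"
  define x where "x = Min X"
  have X: "finite X" "X \<noteq> {}" using strictly_above_exceeds[OF above size] by (auto simp: X_def)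
  have x: "x \<in># B" "c < x" using Min_in[OF X] by (auto simp: x_def X_def)
  obtain B1 where B1: "B = add_mset x B1" using x(1) by (metis multi_member_split)
  have "y \<le> c \<or> x \<le> y" if "y \<in># B1" for y
  proof (cases "c < y")
    case True
    then have "y \<in> X" using that B1 by (auto simp: X_def)
    then show ?thesis using Min_le[OF X(1)] by (simp add: x_def)
  qed simp
  then have gap: "\<forall>y\<in>#B1. y \<le> c \<or> x \<le> y" by blast
  have "strictly_above B1 A" using strictly_above_remove[OF _ A_le x(2) gap] above B1 by simp
  then show ?thesis using that B1 x(2) gap by blast
qed

lemma append_colex_max_noncrossing:
  assumes lengths: "length Q = k" "length P = k"
    and top: "colex_max k P S" and Q: "Q \<in> S" and nc: "noncrossing k Q P"
    and y: "ent Q k < y" and gap: "y \<le> ent P k \<or> x \<le> y"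
  shows "noncrossing (Suc k) (Q @ [y]) (P @ [x])"
proof (rule noncrossing_snocI[OF lengths nc])
  fix a assume a: "1 \<le> a" "a \<le> k" "\<forall>l. a < l \<and> l \<le> k \<longrightarrow> ent Q l = ent P l"
  have "Q = P \<or> colex_less k Q P" using top Q by (simp add: colex_max_def)
  then show "\<not> arcs_cross (ent Q a) y (ent P a) x"
  proof
    assume "colex_less k Q P"
    then obtain d where d: "1 \<le> d" "d \<le> k" "ent Q d < ent P d"
      "\<forall>l. d < l \<and> l \<le> k \<longrightarrow> ent Q l = ent P l" unfolding colex_less_def by blast
    have "\<not> a < d" using a(3) d by auto
    moreover have "ent P d < y \<Longrightarrow> x \<le> y" using gap y d by (cases "d = k") auto
    ultimately show ?thesis using a d unfolding arcs_cross_def by (cases "a = d") auto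
  qed (simp add: arcs_cross_def)
qed

lemma extension_exists:
  assumes k: "1 \<le> k" and "increasing_vectors k P" "pairwise_noncrossing k P"
    "size B = size P" "strictly_above B (column k P)"
  shows "\<exists>L. increasing_vectors (Suc k) L \<and> pairwise_noncrossing (Suc k) L \<and>
    image_mset butlast L = P \<and> image_mset last L = B"
  using assms(2-)
proof (induction "size P" arbitrary: P B)
  case 0 then show ?case
    by (intro exI[of _ "{#}"]) (auto simp: increasing_vectors_def pairwise_noncrossing_def)
next
  case (Suc s)
  have "finite (set_mset P)" "set_mset P \<noteq> {}" "\<forall>Q\<in>set_mset P. length Q = k"
    using Suc.hyps(2) Suc.prems(1) by (auto simp: increasing_vectors_def)
  then obtain P0 where top: "colex_max k P0 (set_mset P)" using colex_max_exists by blast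
  define c where "c = ent P0 k"
  obtain P1 where P1: "P = add_mset P0 P1" using top by (metis colex_max_def multi_member_split)
  have lP0: "length P0 = k" "sorted_wrt (<) P0" using Suc.prems(1) P1 by (auto simp: increasing_vectors_def)
  have col: "column k P = add_mset c (column k P1)" using P1 by (simp add: column_def c_def)
  have col_le: "\<forall>y\<in>#column k P1. y \<le> c"
    using colex_max_last[OF top _ k] P1 by (auto simp: column_def c_def)
  have above: "strictly_above B (add_mset c (column k P1))" using Suc.prems(4) col by simp
  have size: "size B = size (add_mset c (column k P1))" using Suc.prems(3) P1 by (simp add: column_def)
  obtain x B1 where B1: "B = add_mset x B1" "c < x" "\<forall>y\<in>#B1. y \<le> c \<or> x \<le> y"
    "strictly_above B1 (column k P1)"
    using strictly_above_split[OF above size col_le] by blast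
  then obtain L1 where L1: "increasing_vectors (Suc k) L1" "pairwise_noncrossing (Suc k) L1"
    "image_mset butlast L1 = P1" "image_mset last L1 = B1"
    using Suc.hyps(1)[of P1 B1] Suc.hyps(2) Suc.prems(1-3) P1 B1(1,4)
    by (auto simp: increasing_vectors_def pairwise_noncrossing_def)
  define e where "e = P0 @ [x]"
  have e_incr: "length e = Suc k" "sorted_wrt (<) e"
    using lP0 le_ent_last[OF lP0(2,1)] B1(2) by (auto simp: e_def sorted_wrt_append c_def intro: le_less_trans)
  have "noncrossing (Suc k) J e" if J: "J \<in># L1" for J
  proof -
    have lJ: "length J = Suc k" "sorted_wrt (<) J" using L1(1) J by (auto simp: increasing_vectors_def)
    define Q where "Q = butlast J"
    have J_eq: "J = Q @ [last J]" and lQ: "length Q = k" and above_Q: "ent Q k < last J"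
      using increasing_snoc_split[OF lJ] ent_in_set[of k Q] k Q_def by auto
    have Q: "Q \<in># P" and "last J \<in># B1" using J L1(3,4) P1 Q_def by auto
    then have gap: "last J \<le> ent P0 k \<or> x \<le> last J" using B1(3) c_def by blast
    have "noncrossing k Q P0" using Suc.prems(2) Q P1 by (auto simp: pairwise_noncrossing_def)
    with Q have "noncrossing (Suc k) (Q @ [last J]) (P0 @ [x])"
      using append_colex_max_noncrossing[OF lQ lP0(1) top _ _ above_Q gap] by simp
    then show ?thesis using J_eq e_def by simp
  qed
  then have "pairwise_noncrossing (Suc k) (add_mset e L1)"
    using L1(2) noncrossing_sym noncrossing_refl by (auto simp: pairwise_noncrossing_def)
  moreover have "increasing_vectors (Suc k) (add_mset e L1)" using L1(1) e_incr by (simp add: increasing_vectors_def)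
  ultimately show ?case using L1(3,4) P1 B1(1) by (intro exI[of _ "add_mset e L1"]) (simp add: e_def)
qed

subsection \<open>Noncrossing rearrangements\<close>

lemma increasing_butlast:
  assumes "increasing_vectors (Suc k) L"
  shows "increasing_vectors k (image_mset butlast L)"
  unfolding increasing_vectors_def
proof
  fix P assume "P \<in># image_mset butlast L"
  then obtain I where "I \<in># L" "P = butlast I" by auto
  then show "length P = k \<and> sorted_wrt (<) P"
    using assms increasing_snoc_split(2,3)[of I k] by (auto simp: increasing_vectors_def)
qed

lemma noncrossing_butlast:
  assumes incr: "increasing_vectors (Suc k) L" and nc: "pairwise_noncrossing (Suc k) L"
  shows "pairwise_noncrossing k (image_mset butlast L)"
  unfolding pairwise_noncrossing_def
proof (intro ballI)
  fix P Q assume "P \<in># image_mset butlast L" "Q \<in># image_mset butlast L"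
  then obtain I J where IJ: "I \<in># L" "J \<in># L" "P = butlast I" "Q = butlast J" by auto
  then have "length I = Suc k" "sorted_wrt (<) I" "length J = Suc k" "sorted_wrt (<) J"
    using incr by (auto simp: increasing_vectors_def)
  note split = increasing_snoc_split(1,2)[OF this(1,2)] increasing_snoc_split(1,2)[OF this(3,4)]
  have "noncrossing (Suc k) (butlast I @ [last I]) (butlast J @ [last J])"
    using nc IJ(1,2) split by (metis pairwise_noncrossing_def)
  then show "noncrossing k P Q" using noncrossing_snocD(1) split IJ(3,4) by blast
qed

lemma column_butlast:
  "increasing_vectors (Suc k) L \<Longrightarrow> 1 \<le> a \<Longrightarrow> a \<le> k \<Longrightarrow> column a (image_mset butlast L) = column a L"
  unfolding column_def increasing_vectors_def image_mset.compositionality o_def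
  by (intro image_mset_cong) (simp add: ent_def nth_butlast)

lemma column_last:
  assumes "increasing_vectors (Suc k) L"
  shows "column (Suc k) L = image_mset last L"
  unfolding column_def
proof (rule image_mset_cong)
  fix I assume "I \<in># L"
  then have "length I = Suc k" using assms by (simp add: increasing_vectors_def)
  then have "I \<noteq> []" by auto
  with \<open>length I = Suc k\<close> show "ent I (Suc k) = last I" by (simp add: ent_def last_conv_nth)
qed

lemma same_columns_Suc:
  assumes "increasing_vectors (Suc k) L" "increasing_vectors (Suc k) L'"
  shows "same_columns (Suc k) L L' \<longleftrightarrow>
    same_columns k (image_mset butlast L) (image_mset butlast L') \<and> image_mset last L = image_mset last L'"
  using column_butlast[OF assms(1)] column_butlast[OF assms(2)] column_last[OF assms(1)] column_last[OF assms(2)]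
  unfolding same_columns_def by (auto simp: le_Suc_eq)

(* In an increasing vector the last entry exceeds the k-th one, so the last column is strictly
   above the k-th column. *)
lemma last_strictly_above:
  assumes k: "1 \<le> k" and incr: "increasing_vectors (Suc k) L"
  shows "strictly_above (image_mset last L) (column k L)"
  unfolding strictly_above_def column_def filter_mset_image_mset size_image_mset
proof
  fix t
  show "size (filter_mset (\<lambda>I. last I \<le> t) L) \<le> size (filter_mset (\<lambda>I. ent I k < t) L)"
  proof (rule size_filter_mset_mono)
    fix I assume I: "I \<in># L" "last I \<le> t"
    have lI: "length I = Suc k" "sorted_wrt (<) I" using incr I(1) by (auto simp: increasing_vectors_def)
    have "ent I k = ent (butlast I) k" using lI k by (simp add: ent_def nth_butlast)
    also have "\<dots> < last I" using increasing_snoc_split(2,4)[OF lI] ent_in_set[of k "butlast I"] k by auto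
    finally show "ent I k < t" using I(2) by simp
  qed
qed

lemma single_entry_vectors:
  assumes "increasing_vectors 1 L"
  shows "L = image_mset (\<lambda>x. [x]) (column 1 L)"
proof -
  have "image_mset (\<lambda>x. [x]) (column 1 L) = image_mset (\<lambda>I. [ent I 1]) L"
    by (simp add: column_def image_mset.compositionality o_def)
  also have "\<dots> = image_mset id L"
  proof (rule image_mset_cong)
    fix I assume "I \<in># L"
    then have "length I = 1" using assms by (auto simp: increasing_vectors_def)
    then show "[ent I 1] = id I" by (cases I) (auto simp: ent_def)
  qed
  finally show ?thesis by simp
qed

(* Every multiset of increasing vectors can be rearranged, column by column, into a pairwise
   noncrossing one: rearrange the truncations, then attach the last column by extension_exists. *)
lemma noncrossing_rearrangement_exists:
  assumes "1 \<le> k" "increasing_vectors k L"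
  shows "\<exists>L'. increasing_vectors k L' \<and> pairwise_noncrossing k L' \<and> same_columns k L' L"
  using assms
proof (induction k arbitrary: L rule: nat_induct_at_least)
  case base then show ?case using pairwise_noncrossing_le_1 by (auto simp: same_columns_def)
next
  case (Suc k)
  define P where "P = image_mset butlast L"
  obtain P' where P': "increasing_vectors k P'" "pairwise_noncrossing k P'" "same_columns k P' P"
    using Suc.IH increasing_butlast[OF Suc.prems] P_def by blast
  have "column k P' = column k L"
    using P'(3) column_butlast[OF Suc.prems Suc.hyps order_refl] Suc.hyps
    unfolding P_def same_columns_def by simp
  then have "strictly_above (image_mset last L) (column k P')"
    using last_strictly_above[OF Suc.hyps Suc.prems] by simp
  moreover have "size (image_mset last L) = size P'" using P'(3) by (simp add: same_columns_def P_def)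
  ultimately obtain L' where L': "increasing_vectors (Suc k) L'" "pairwise_noncrossing (Suc k) L'"
    "image_mset butlast L' = P'" "image_mset last L' = image_mset last L"
    using extension_exists[OF Suc.hyps P'(1,2)] by blast
  have "same_columns (Suc k) L' L"
    using same_columns_Suc[OF L'(1) Suc.prems] L'(3,4) P'(3) P_def by simp
  then show ?case using L' by blast
qed

lemma noncrossing_determined_by_columns:
  assumes "1 \<le> k" "increasing_vectors k L" "increasing_vectors k L'"
    "pairwise_noncrossing k L" "pairwise_noncrossing k L'" "same_columns k L L'"
  shows "L = L'"
  using assms
proof (induction k arbitrary: L L' rule: nat_induct_at_least)
  case base
  then show ?case using single_entry_vectors[of L] single_entry_vectors[of L']
    by (simp add: same_columns_def)
next
  case (Suc k)
  have "image_mset butlast L = image_mset butlast L'"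
    using Suc.IH increasing_butlast noncrossing_butlast Suc.prems same_columns_Suc[OF Suc.prems(1,2)] by blast
  moreover have "image_mset last L = image_mset last L'"
    using same_columns_Suc[OF Suc.prems(1,2)] Suc.prems(5) by blast
  ultimately show ?case using extension_unique[OF Suc.hyps Suc.prems(1-4)] by blast
qed

context tableau_data
begin

lemma solutions_same_columns:
  assumes "set_mset L \<subseteq> Vstar k n" "has_summing_tableau k n L T"
    "set_mset L' \<subseteq> Vstar k n" "has_summing_tableau k n L' T"
  shows "same_columns k L L'"
  using summing_tableau_determines_columns assms k_pos k_le by blast

lemma unique_nonnesting_solution:
  "\<exists>!L. set_mset L \<subseteq> Vstar k n \<and> (\<forall>I\<in>#L. \<forall>J\<in>#L. nonnesting k I J) \<and> has_summing_tableau k n L T"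
proof (rule ex1I[of _ chain_solution])
  fix L assume L: "set_mset L \<subseteq> Vstar k n \<and> (\<forall>I\<in>#L. \<forall>J\<in>#L. nonnesting k I J) \<and> has_summing_tableau k n L T"
  then have "same_columns k L chain_solution"
    using solutions_same_columns chain_solution_Vstar chain_solution_summing by blast
  then show "L = chain_solution"
    using nonnesting_determined_by_columns[OF Vstar_increasing Vstar_increasing] chain_solution_Vstar
      chain_solution_nonnesting L by blast
qed (use chain_solution_Vstar chain_solution_nonnesting chain_solution_summing in blast)

(* The noncrossing solution is the noncrossing rearrangement of the chain solution. *)
lemma unique_noncrossing_solution:
  "\<exists>!L. set_mset L \<subseteq> Vstar k n \<and> (\<forall>I\<in>#L. \<forall>J\<in>#L. noncrossing k I J) \<and> has_summing_tableau k n L T"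
proof -
  obtain L1 where L1: "increasing_vectors k L1" "pairwise_noncrossing k L1" "same_columns k L1 chain_solution"
    using noncrossing_rearrangement_exists[OF k_pos Vstar_increasing[OF chain_solution_Vstar]] by blast
  have L1_solution: "set_mset L1 \<subseteq> Vstar k n" "has_summing_tableau k n L1 T"
    using Vstar_same_columns[OF k_pos chain_solution_Vstar L1(1,3)] chain_solution_summing
      has_summing_tableau_same_columns[OF L1(3)] by auto
  show ?thesis
  proof (rule ex1I[of _ L1])
    fix L assume L: "set_mset L \<subseteq> Vstar k n \<and> (\<forall>I\<in>#L. \<forall>J\<in>#L. noncrossing k I J) \<and> has_summing_tableau k n L T"
    then have "same_columns k L L1" using solutions_same_columns L1_solution by blast
    then show "L = L1"
      using noncrossing_determined_by_columns[OF k_pos Vstar_increasing L1(1) _ L1(2)] L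
      unfolding pairwise_noncrossing_def by blast
  qed (use L1(2) L1_solution in \<open>auto simp: pairwise_noncrossing_def\<close>)
qed

end

theorem theorem2p3:
  fixes k n :: nat and T :: "nat \<Rightarrow> nat \<Rightarrow> nat"
  assumes "1 \<le> k" and "k \<le> n - 1" and "is_tableau k n T"
  shows "(\<exists>!L. set_mset L \<subseteq> Vstar k n \<and>
              (\<forall>I\<in>#L. \<forall>J\<in>#L. nonnesting k I J) \<and> has_summing_tableau k n L T)
       \<and> (\<exists>!L. set_mset L \<subseteq> Vstar k n \<and>
              (\<forall>I\<in>#L. \<forall>J\<in>#L. noncrossing k I J) \<and> has_summing_tableau k n L T)"
proof -
  interpret tableau_data k n T using assms by unfold_locales
  show ?thesis using unique_nonnesting_solution unique_noncrossing_solution ..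
qed

end
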